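(* Let $d,p\ge1$, let $\eta:\mathbb R^d\to\mathbb R$ be measurable, let $P_1,\dots,P_d$ be probability distributions on $\mathbb R$, let $\Theta\subset\mathbb R^p$ be compact and $(C_\theta)_{\theta\in\Theta}$ a family of $d$-dimensional copulas; let $P_\theta$ be the distribution on $\mathbb R^d$ with marginals $P_1,\dots,P_d$ and copula $C_\theta$ (joint CDF $C_\theta(F_1(x_1),\dots,F_d(x_d))$, $F_j$ the CDF of $P_j$), and let $G_\theta$ be the CDF of $\eta(\mathbf X)$ for $\mathbf X\sim P_\theta$, with $G_\theta^{-1}(\alpha)=\inf\{y:G_\theta(y)\ge\alpha\}$. Fix $\alpha\in(0,1)$ and assume: (A1) for every $\theta\in\Theta$, $P_\theta$ has a Lebesgue density $f_\theta$ on $\mathbb R^d$ and $C_\theta$ has a Lebesgue density $c_\theta$ on $[0,1]^d$, with $(\theta,\mathbf u)\mapsto c_\theta(\mathbf u)$ continuous on $\Theta\times[0,1]^d$; (A2) for every $\theta\in\Theta$, $G_\theta$ is continuous; (A3) for every $\theta\in\Theta$, $G_\theta$ is strictly increasing, and there is a function $\underline{\epsilon}_\Theta:(0,\infty)\to(0,\infty)$ with $\min\big(G_\theta(y_\theta+\delta)-G_\theta(y_\theta),\,G_\theta(y_\theta)-G_\theta(y_\theta-\delta)\big)\ge\underline{\epsilon}_\Theta(\delta)$ for all $\theta\in\Theta$, $\delta>0$, where $y_\theta=G_\theta^{-1}(\alpha)$. Then the map $\theta\mapsto G_\theta^{-1}(\alpha)$ is continuous on $\Theta$.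
   Context: A $d$-dimensional copula is a CDF on $[0,1]^d$ with uniform marginals. *)

theory Defs
  imports "HOL-Probability.Probability"
begin

definition cdf_vec :: "(real^'d) measure \<Rightarrow> real^'d \<Rightarrow> real" where
  "cdf_vec M x = measure M {y. \<forall>i. y $ i \<le> x $ i}"

definition is_copula :: "(real^'d \<Rightarrow> real) \<Rightarrow> bool" where
  "is_copula C \<longleftrightarrow> (\<exists>\<mu>. prob_space \<mu> \<and> sets \<mu> = sets borel \<and>
      measure \<mu> (UNIV - cbox 0 One) = 0 \<and>
      (\<forall>u\<in>cbox 0 One. C u = cdf_vec \<mu> u) \<and>
      (\<forall>i. \<forall>t\<in>{0..1::real}. measure \<mu> {y. y $ i \<le> t} = t))"

definition push_cdf :: "(real^'d) measure \<Rightarrow> (real^'d \<Rightarrow> real) \<Rightarrow> real \<Rightarrow> real" where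
  "push_cdf M \<eta> y = measure M {x. \<eta> x \<le> y}"

definition gen_inv :: "(real \<Rightarrow> real) \<Rightarrow> real \<Rightarrow> real" where
  "gen_inv G \<alpha> = Inf {y. G y \<ge> \<alpha>}"

end

theory Submission
  imports Defs
begin

text \<open>
  Let \<open>T u = (F\<^sub>1\<^sup>-\<^sup>1(u\<^sub>1), \<dots>, F\<^sub>d\<^sup>-\<^sup>1(u\<^sub>d))\<close> be the coordinatewise quantile map. Since
  \<open>T u \<le> x \<longleftrightarrow> u \<le> (F\<^sub>1(x\<^sub>1), \<dots>, F\<^sub>d(x\<^sub>d))\<close> on the open unit cube, \<open>P\<^sub>\<theta>\<close> is the image under \<open>T\<close> of the
  measure with density \<open>c\<^sub>\<theta>\<close> on the cube, so \<open>G\<^sub>\<theta>(y) = \<integral>\<^bsub>T\<^sup>-\<^sup>1{\<eta> \<le> y}\<^esub> c\<^sub>\<theta>\<close> and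
  \<open>sup\<^sub>y \<bar>G\<^sub>\<theta>\<^sub>'(y) - G\<^sub>\<theta>(y)\<bar> \<le> sup\<^sub>u \<bar>c\<^sub>\<theta>\<^sub>'(u) - c\<^sub>\<theta>(u)\<bar>\<close>, which tends to 0 as \<open>\<theta>' \<rightarrow> \<theta>\<close> by the
  tube lemma. As \<open>G\<^sub>\<theta>\<close> is continuous and strictly increasing, \<open>G\<^sub>\<theta>(y\<^sub>\<theta> - \<delta>) < \<alpha> < G\<^sub>\<theta>(y\<^sub>\<theta> + \<delta>)\<close>
  with \<open>y\<^sub>\<theta> = G\<^sub>\<theta>\<^sup>-\<^sup>1(\<alpha>)\<close>, and uniform closeness of \<open>G\<^sub>\<theta>\<^sub>'\<close> to \<open>G\<^sub>\<theta>\<close> then traps \<open>y\<^sub>\<theta>\<^sub>'\<close> in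
  \<open>(y\<^sub>\<theta> - \<delta>, y\<^sub>\<theta> + \<delta>]\<close>.
\<close>

section \<open>Quantile functions\<close>

text \<open>Outside \<open>(0, 1)\<close> the generalized inverse is the infimum of an empty or unbounded set; the junk
  value 0 there makes the quantile function Borel measurable on all of \<open>\<real>\<close>.\<close>

definition quantile :: "real measure \<Rightarrow> real \<Rightarrow> real" where
  "quantile M u = (if u \<in> {0<..<1} then gen_inv (cdf M) u else 0)"

lemma gen_inv_cdf_le_iff:
  assumes "real_distribution M" "0 < u" "u < 1"
  shows "gen_inv (cdf M) u \<le> t \<longleftrightarrow> u \<le> cdf M t"
proof -
  interpret real_distribution M by fact
  let ?S = "{x. u \<le> cdf M x}"
  have "\<forall>\<^sub>F x in at_top. u < cdf M x"
    using cdf_lim_at_top_prob \<open>u < 1\<close> by (simp add: order_tendstoD(1))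
  then obtain a where "u < cdf M a"
    by (metis eventually_at_top_linorder order_refl)
  then have nonempty: "?S \<noteq> {}"
    by (auto intro: less_imp_le)
  have "\<forall>\<^sub>F x in at_bot. cdf M x < u"
    using cdf_lim_at_bot \<open>0 < u\<close> by (simp add: order_tendstoD(2))
  then obtain b where b: "\<And>x. x \<le> b \<Longrightarrow> cdf M x < u"
    by (metis eventually_at_bot_linorder)
  have "b \<le> x" if "x \<in> ?S" for x
    using that b[of x] by (cases "x \<le> b") auto
  then have bdd: "bdd_below ?S"
    by (rule bdd_belowI)
  have "u \<le> cdf M x" if "Inf ?S < x" for x
  proof -
    obtain s where "s \<in> ?S" "s < x"
      using cInf_less_iff[OF nonempty bdd] \<open>Inf ?S < x\<close> by blast
    then show ?thesis
      using cdf_nondecreasing[of s x] by auto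
  qed
  then have above: "\<forall>\<^sub>F x in at_right (Inf ?S). u \<le> cdf M x"
    by (intro eventually_at_rightI[of _ "Inf ?S + 1"]) auto
  have "(cdf M \<longlongrightarrow> cdf M (Inf ?S)) (at_right (Inf ?S))"
    using cdf_is_right_cont continuous_within by blast
  then have Inf_mem: "u \<le> cdf M (Inf ?S)"
    using above trivial_limit_at_right_real by (rule tendsto_lowerbound)
  show ?thesis
    unfolding gen_inv_def
  proof
    assume "Inf ?S \<le> t"
    then show "u \<le> cdf M t"
      using Inf_mem cdf_nondecreasing[of "Inf ?S" t] by auto
  next
    assume "u \<le> cdf M t"
    then show "Inf ?S \<le> t"
      using cInf_lower[OF _ bdd] by auto
  qed
qed

lemma quantile_le_iff:
  "real_distribution M \<Longrightarrow> u \<in> {0<..<1} \<Longrightarrow> quantile M u \<le> t \<longleftrightarrow> u \<le> cdf M t"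
  by (simp add: quantile_def gen_inv_cdf_le_iff)

lemma cdf_gen_inv_cdf:
  assumes M: "real_distribution M" and u: "0 < u" "u < 1"
    and cont: "isCont (cdf M) (gen_inv (cdf M) u)"
  shows "cdf M (gen_inv (cdf M) u) = u"
proof -
  let ?y = "gen_inv (cdf M) u"
  have below: "\<forall>\<^sub>F t in at_left ?y. cdf M t \<le> u"
  proof (rule eventually_at_leftI[of "?y - 1"])
    fix t assume "t \<in> {?y - 1<..<?y}"
    then have "\<not> ?y \<le> t"
      by simp
    then show "cdf M t \<le> u"
      using gen_inv_cdf_le_iff[OF M u, of t] by simp
  qed simp
  have "(cdf M \<longlongrightarrow> cdf M ?y) (at_left ?y)"
    using cont by (simp add: isCont_def filterlim_at_split)
  then have "cdf M ?y \<le> u"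
    using below trivial_limit_at_left_real by (rule tendsto_upperbound)
  moreover have "u \<le> cdf M ?y"
    using gen_inv_cdf_le_iff[OF M u, of ?y] by simp
  ultimately show ?thesis
    by simp
qed

lemma borel_measurable_quantile:
  assumes "real_distribution M"
  shows "quantile M \<in> borel_measurable borel"
proof -
  have "mono_on {0<..<1} (gen_inv (cdf M))"
    using gen_inv_cdf_le_iff[OF assms]
    by (intro mono_onI) (meson greaterThanLessThan_iff order.refl order.trans)
  then have "(\<lambda>u. indicator {0<..<1} u *\<^sub>R gen_inv (cdf M) u) \<in> borel_measurable borel"
    by (subst borel_measurable_restrict_space_iff[symmetric])
       (auto intro: borel_measurable_mono_on_fnc)
  also have "(\<lambda>u. indicator {0<..<1} u *\<^sub>R gen_inv (cdf M) u) = quantile M"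
    by (auto simp: quantile_def indicator_def)
  finally show ?thesis .
qed

definition quantile_map :: "('d \<Rightarrow> real measure) \<Rightarrow> real^'d \<Rightarrow> real^'d" where
  "quantile_map P u = (\<chi> j. quantile (P j) (u $ j))"

lemma borel_measurable_quantile_map:
  fixes P :: "'d::finite \<Rightarrow> real measure"
  assumes "\<And>j. real_distribution (P j)"
  shows "quantile_map P \<in> borel_measurable borel"
proof (subst borel_measurable_euclidean_space, intro ballI)
  fix i :: "real^'d" assume "i \<in> Basis"
  then obtain j where i: "i = axis j 1"
    by (auto simp: Basis_vec_def)
  have "(\<lambda>u. quantile (P j) (u $ j)) \<in> borel_measurable borel"
    by (intro measurable_compose[OF _ borel_measurable_quantile[OF assms]] borel_measurable_continuous_onI
        continuous_intros)
  then show "(\<lambda>u. quantile_map P u \<bullet> i) \<in> borel_measurable borel"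
    by (simp add: i quantile_map_def inner_axis)
qed

lemma quantile_map_le_iff:
  fixes P :: "'d::finite \<Rightarrow> real measure"
  assumes "\<And>j. real_distribution (P j)" "u \<in> box 0 One"
  shows "quantile_map P u \<le> x \<longleftrightarrow> u \<le> (\<chi> j. cdf (P j) (x $ j))"
  using assms quantile_le_iff[OF assms(1)]
  by (simp add: quantile_map_def less_eq_vec_def mem_box_cart Cart_1[symmetric])

section \<open>Distributions with a copula density\<close>

lemma measure_eqI_atMost:
  fixes M N :: "'a::ordered_euclidean_space measure"
  assumes sets: "sets M = sets borel" "sets N = sets borel"
    and fin: "\<And>x. emeasure M {..x} < \<infinity>"
    and eq: "\<And>x. emeasure M {..x} = emeasure N {..x}"
  shows "M = N"
proof (rule measure_eqI_generator_eq[where \<Omega> = UNIV and A = "\<lambda>n. {..real n *\<^sub>R One}"])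
  let ?E = "range (\<lambda>x::'a. {..x})"
  show "Int_stable ?E"
  proof (rule Int_stableI, safe)
    fix a b :: 'a
    have "{..a} \<inter> {..b} = {..inf a b}"
      by auto
    then show "{..a} \<inter> {..b} \<in> ?E"
      by blast
  qed
  show "sets M = sigma_sets UNIV ?E" "sets N = sigma_sets UNIV ?E"
    using sets by (simp_all add: borel_eq_atMost sets_measure_of)
  show "(\<Union>n. {..real n *\<^sub>R One}) = (UNIV :: 'a set)"
  proof safe
    fix x :: 'a
    obtain n :: nat where "norm x \<le> real n"
      using real_arch_simple by blast
    then have "x \<bullet> i \<le> real n" if "i \<in> Basis" for i
      using Basis_le_norm[OF that, of x] by linarith
    then have "x \<le> real n *\<^sub>R One"
      by (simp add: eucl_le[where 'a='a])
    then show "x \<in> (\<Union>n. {..real n *\<^sub>R One})"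
      by auto
  qed auto
  show "emeasure M {..real n *\<^sub>R One} \<noteq> \<infinity>" for n
    using fin by (simp add: less_top)
qed (auto simp: eq)

lemma measure_density_eq_integral:
  assumes "integrable M f" "\<And>x. 0 \<le> f x" "B \<in> sets M"
  shows "measure (density M f) B = (\<integral>x. indicator B x * f x \<partial>M)"
proof -
  have "emeasure (density M f) B = (\<integral>\<^sup>+x. ennreal (indicator B x * f x) \<partial>M)"
    using assms by (auto simp: emeasure_density borel_measurable_integrable intro!: nn_integral_cong
        split: split_indicator)
  also have "\<dots> = ennreal (\<integral>x. indicator B x * f x \<partial>M)"
    using assms integrable_mult_indicator[of B M f] by (intro nn_integral_eq_integral) auto
  finally show ?thesis
    using assms(2) by (simp add: measure_def)
qed

lemma measure_density_indicator_diff_le: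
  fixes f g :: "'a \<Rightarrow> real"
  assumes f: "set_integrable M S f" "\<And>x. x \<in> S \<Longrightarrow> 0 \<le> f x"
    and g: "set_integrable M S g" "\<And>x. x \<in> S \<Longrightarrow> 0 \<le> g x"
    and S: "S \<in> sets M" "emeasure M S < \<infinity>"
    and close: "\<And>x. x \<in> S \<Longrightarrow> \<bar>f x - g x\<bar> \<le> e"
    and B: "B \<in> sets M"
  shows "\<bar>measure (density M (\<lambda>x. indicator S x * f x)) B - measure (density M (\<lambda>x. indicator S x * g x)) B\<bar>
    \<le> e * measure M S"
proof -
  let ?f = "\<lambda>x. indicator S x * f x" and ?g = "\<lambda>x. indicator S x * g x"
  have nonneg: "0 \<le> ?f x" "0 \<le> ?g x" for x
    using f(2)[of x] g(2)[of x] by (simp_all add: indicator_def)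
  have int: "integrable M ?f" "integrable M ?g"
    using f(1) g(1) by (simp_all add: set_integrable_def)
  have int_B: "integrable M (\<lambda>x. indicator B x * ?f x)" "integrable M (\<lambda>x. indicator B x * ?g x)"
    using integrable_mult_indicator[OF B int(1)] integrable_mult_indicator[OF B int(2)] by simp_all
  have bound: "\<bar>indicator B x * ?f x - indicator B x * ?g x\<bar> \<le> e * indicator S x" for x
    using close[of x] abs_ge_zero[of "f x - g x"] by (auto simp: indicator_def)
  have "measure (density M ?f) B - measure (density M ?g) B =
      (\<integral>x. indicator B x * ?f x - indicator B x * ?g x \<partial>M)"
    using measure_density_eq_integral[OF int(1) nonneg(1) B] measure_density_eq_integral[OF int(2) nonneg(2) B]
      Bochner_Integration.integral_diff[OF int_B] by simp
  also have "\<bar>\<dots>\<bar> \<le> (\<integral>x. \<bar>indicator B x * ?f x - indicator B x * ?g x\<bar> \<partial>M)"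
    by (rule integral_abs_bound)
  also have "\<dots> \<le> (\<integral>x. e * indicator S x \<partial>M)"
    using int_B S bound by (intro integral_mono) auto
  also have "\<dots> = e * measure M S"
    using S by simp
  finally show ?thesis .
qed

lemma has_integral_box_Int_atMost:
  fixes f :: "real^'d \<Rightarrow> 'b::banach"
  assumes "(f has_integral I) (cbox 0 v)" "v \<in> cbox 0 One"
  shows "(f has_integral I) (box 0 One \<inter> {..v})"
proof -
  have v: "0 \<le> v" "cbox 0 v \<subseteq> cbox 0 One"
    using \<open>v \<in> cbox 0 One\<close> by (simp_all add: interval_cbox[symmetric])
  then have frontier: "cbox 0 v - box 0 One \<inter> {..v} \<subseteq> cbox 0 One - box 0 One"
    and inner: "box 0 One \<inter> {..v} \<subseteq> cbox 0 v"
    using box_subset_cbox[of 0 One] by (auto simp: interval_cbox[symmetric])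
  have N1: "negligible {u \<in> cbox 0 v - box 0 One \<inter> {..v}. f u \<noteq> 0}"
    by (rule negligible_subset[OF negligible_frontier_interval]) (use frontier in blast)
  have N2: "negligible {u \<in> box 0 One \<inter> {..v} - cbox 0 v. f u \<noteq> 0}"
    by (rule negligible_subset[of "{}"]) (use inner in auto)
  show ?thesis
    using has_integral_spike_set_eq[OF N1 N2] assms(1) by simp
qed

lemma marginal_cdfs_mem_unit_cube:
  assumes "\<And>j. real_distribution (P j)"
  shows "(\<chi> j. cdf (P j) (x $ j)) \<in> cbox 0 One"
  using real_distribution.cdf_bounded_prob[OF assms]
    finite_borel_measure.cdf_nonneg[OF real_distribution.finite_borel_measure_M[OF assms]]
  by (auto simp: mem_box_cart Cart_1[symmetric])

definition has_copula_density :: "('d \<Rightarrow> real measure) \<Rightarrow> (real^'d \<Rightarrow> real) \<Rightarrow> (real^'d) measure \<Rightarrow> bool"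
  where "has_copula_density P c M \<longleftrightarrow> prob_space M \<and> sets M = sets borel \<and>
    set_integrable lborel (box 0 One) c \<and> (\<forall>u\<in>cbox 0 One. 0 \<le> c u) \<and>
    (\<forall>x. (c has_integral cdf_vec M x) (cbox 0 (\<chi> j. cdf (P j) (x $ j))))"

lemma has_copula_densityI:
  fixes P :: "'d::finite \<Rightarrow> real measure"
  assumes marginals: "\<And>j. real_distribution (P j)"
    and M: "prob_space M" "sets M = sets borel" "\<forall>x. cdf_vec M x = C (\<chi> j. cdf (P j) (x $ j))"
    and c: "\<forall>u\<in>cbox 0 One. 0 \<le> c u \<and> (c has_integral C u) (cbox 0 u)"
    and c_cont: "continuous_on (cbox 0 One) c"
  shows "has_copula_density P c M"
proof -
  have "set_integrable lborel (cbox 0 One) c"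
    unfolding set_integrable_def by (rule borel_integrable_compact[OF compact_cbox c_cont])
  then have "set_integrable lborel (box 0 One) c"
    by (rule set_integrable_subset) (auto simp: box_subset_cbox)
  then show ?thesis
    using M c marginal_cdfs_mem_unit_cube[of P, OF marginals] by (simp add: has_copula_density_def)
qed

text \<open>Both measures are determined by their values on lower orthants \<open>{..x}\<close>, and on the open cube
  the preimage of \<open>{..x}\<close> under the quantile map is the orthant \<open>{..(F\<^sub>1(x\<^sub>1), \<dots>, F\<^sub>d(x\<^sub>d))}\<close>.\<close>

lemma distr_quantile_map_copula_density:
  fixes P :: "'d::finite \<Rightarrow> real measure"
  assumes marginals: "\<And>j. real_distribution (P j)" and M: "has_copula_density P c M"
  shows "M = distr (density lborel (\<lambda>u. indicator (box 0 One) u * c u)) borel (quantile_map P)"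
proof (rule measure_eqI_atMost)
  interpret prob_space M
    using M by (simp add: has_copula_density_def)
  let ?\<nu> = "density lborel (\<lambda>u. indicator (box 0 One) u * c u)"
  fix x :: "real^'d"
  define v where "v = (\<chi> j. cdf (P j) (x $ j))"
  have v: "v \<in> cbox 0 One"
    unfolding v_def by (rule marginal_cdfs_mem_unit_cube[of P, OF marginals])
  have T: "quantile_map P \<in> borel_measurable borel"
    by (rule borel_measurable_quantile_map[of P, OF marginals])
  have "emeasure M {..x} = ennreal (cdf_vec M x)"
    by (simp add: emeasure_eq_measure cdf_vec_def less_eq_vec_def atMost_def)
  also have "\<dots> = (\<integral>\<^sup>+u. ennreal (c u) * indicator (box 0 One \<inter> {..v}) u \<partial>lborel)"
    using M v box_subset_cbox[of 0 One] unfolding has_copula_density_def v_def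
    by (intro nn_integral_has_integral_lebesgue'[symmetric] has_integral_box_Int_atMost) auto
  also have "\<dots> =
      (\<integral>\<^sup>+u. ennreal (indicator (box 0 One) u * c u) * indicator (quantile_map P -` {..x}) u \<partial>lborel)"
    using quantile_map_le_iff[of P, OF marginals] by (intro nn_integral_cong) (auto simp: v_def indicator_def)
  also have "\<dots> = emeasure ?\<nu> (quantile_map P -` {..x})"
    using M measurable_sets_borel[OF T, of "{..x}"] unfolding has_copula_density_def set_integrable_def
    by (intro emeasure_density[symmetric]) (auto dest: borel_measurable_integrable)
  also have "\<dots> = emeasure (distr ?\<nu> borel (quantile_map P)) {..x}"
    using T by (simp add: emeasure_distr)
  finally show "emeasure M {..x} = emeasure (distr ?\<nu> borel (quantile_map P)) {..x}" .
  show "emeasure M {..x} < \<infinity>"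
    by (simp add: emeasure_eq_measure)
qed (use M in \<open>simp_all add: has_copula_density_def\<close>)

lemma push_cdf_copula_density:
  fixes P :: "'d::finite \<Rightarrow> real measure"
  assumes marginals: "\<And>j. real_distribution (P j)" and M: "has_copula_density P c M"
    and \<eta>: "\<eta> \<in> borel_measurable borel"
  shows "push_cdf M \<eta> y =
    measure (density lborel (\<lambda>u. indicator (box 0 One) u * c u)) (quantile_map P -` {x. \<eta> x \<le> y})"
proof -
  have "push_cdf M \<eta> y =
      measure (distr (density lborel (\<lambda>u. indicator (box 0 One) u * c u)) borel (quantile_map P))
        {x. \<eta> x \<le> y}"
    by (subst distr_quantile_map_copula_density[OF marginals M]) (simp add: push_cdf_def)
  also have "\<dots> =
      measure (density lborel (\<lambda>u. indicator (box 0 One) u * c u)) (quantile_map P -` {x. \<eta> x \<le> y})"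
    by (subst measure_distr) (use borel_measurable_quantile_map[of P, OF marginals] \<eta> in auto)
  finally show ?thesis .
qed

lemma push_cdf_copula_density_diff_le:
  fixes P :: "'d::finite \<Rightarrow> real measure"
  assumes marginals: "\<And>j. real_distribution (P j)"
    and M: "has_copula_density P c M" and N: "has_copula_density P c' N"
    and close: "\<And>u. u \<in> box 0 One \<Longrightarrow> \<bar>c u - c' u\<bar> \<le> e"
    and \<eta>: "\<eta> \<in> borel_measurable borel"
  shows "\<bar>push_cdf M \<eta> y - push_cdf N \<eta> y\<bar> \<le> e"
proof -
  have c: "set_integrable lborel (box 0 One) c" "\<And>u. u \<in> box 0 One \<Longrightarrow> 0 \<le> c u"
    and c': "set_integrable lborel (box 0 One) c'" "\<And>u. u \<in> box 0 One \<Longrightarrow> 0 \<le> c' u"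
    using M N box_subset_cbox[of 0 One] by (auto simp: has_copula_density_def)
  have B: "quantile_map P -` {x. \<eta> x \<le> y} \<in> sets lborel"
    unfolding sets_lborel using \<eta>
    by (intro measurable_sets_borel[OF borel_measurable_quantile_map[of P, OF marginals]]) measurable
  have "\<bar>push_cdf M \<eta> y - push_cdf N \<eta> y\<bar> \<le> e * measure lborel (box 0 (One::real^'d))"
    unfolding push_cdf_copula_density[OF marginals M \<eta>] push_cdf_copula_density[OF marginals N \<eta>]
    by (rule measure_density_indicator_diff_le[OF c c' _ _ close B]) auto
  also have "e * measure lborel (box 0 (One::real^'d)) = e"
    by (simp add: measure_lborel_box_eq inner_sum_left inner_Basis)
  finally show ?thesis .
qed

section \<open>Continuity of quantiles\<close>

lemma push_cdf_eq_cdf_distr: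
  assumes "prob_space M" "sets M = sets borel" "\<eta> \<in> borel_measurable borel"
  shows "real_distribution (distr M borel \<eta>)" "push_cdf M \<eta> = cdf (distr M borel \<eta>)"
proof -
  have \<eta>: "\<eta> \<in> borel_measurable M"
    using assms(2,3) measurable_cong_sets by blast
  then show "real_distribution (distr M borel \<eta>)"
    by (rule prob_space.real_distribution_distr[OF assms(1)])
  have "space M = UNIV"
    using sets_eq_imp_space_eq[OF assms(2)] by simp
  with \<eta> show "push_cdf M \<eta> = cdf (distr M borel \<eta>)"
    by (simp add: fun_eq_iff push_cdf_def cdf_def measure_distr vimage_def)
qed

lemma eventually_push_cdf_copula_density_close:
  fixes P :: "'d::finite \<Rightarrow> real measure" and c :: "'a::topological_space \<Rightarrow> real^'d \<Rightarrow> real"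
  assumes marginals: "\<And>j. real_distribution (P j)"
    and M: "\<And>\<theta>. \<theta> \<in> \<Theta> \<Longrightarrow> has_copula_density P (c \<theta>) (M \<theta>)"
    and c_cont: "continuous_on (\<Theta> \<times> cbox 0 One) (\<lambda>(\<theta>, u). c \<theta> u)"
    and \<eta>: "\<eta> \<in> borel_measurable borel"
    and \<theta>: "\<theta> \<in> \<Theta>" and "0 < e"
  shows "\<forall>\<^sub>F \<theta>' in at \<theta> within \<Theta>. \<forall>y. \<bar>push_cdf (M \<theta>') \<eta> y - push_cdf (M \<theta>) \<eta> y\<bar> < e"
proof -
  obtain X where "\<theta> \<in> X" "open X"
    and X: "\<forall>\<theta>'\<in>X \<inter> \<Theta>. \<forall>u\<in>cbox 0 One. dist (c \<theta>' u) (c \<theta> u) \<le> e / 2"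
    using continuous_on_prod_compactE[OF c_cont compact_cbox \<theta>, of "e / 2"] \<open>0 < e\<close> by auto
  then have "\<forall>\<^sub>F \<theta>' in at \<theta> within \<Theta>. \<theta>' \<in> X \<inter> \<Theta>"
    unfolding eventually_at_topological by blast
  then show ?thesis
  proof (rule eventually_mono, intro allI)
    fix \<theta>' y assume \<theta>': "\<theta>' \<in> X \<inter> \<Theta>"
    have "\<bar>c \<theta>' u - c \<theta> u\<bar> \<le> e / 2" if "u \<in> box 0 One" for u
      using X \<theta>' subsetD[OF box_subset_cbox that] by (simp add: dist_real_def)
    then have "\<bar>push_cdf (M \<theta>') \<eta> y - push_cdf (M \<theta>) \<eta> y\<bar> \<le> e / 2"
      using \<theta>' by (intro push_cdf_copula_density_diff_le[OF marginals M M _ \<eta>] \<theta>) auto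
    then show "\<bar>push_cdf (M \<theta>') \<eta> y - push_cdf (M \<theta>) \<eta> y\<bar> < e"
      using \<open>0 < e\<close> by linarith
  qed
qed

lemma continuous_on_gen_inv:
  fixes G :: "'a::topological_space \<Rightarrow> real \<Rightarrow> real"
  assumes distr: "\<And>\<theta>. \<theta> \<in> \<Theta> \<Longrightarrow> real_distribution (D \<theta>)"
    and G: "\<And>\<theta>. \<theta> \<in> \<Theta> \<Longrightarrow> G \<theta> = cdf (D \<theta>)"
    and cont: "\<And>\<theta>. \<theta> \<in> \<Theta> \<Longrightarrow> continuous_on UNIV (G \<theta>)"
    and mono: "\<And>\<theta>. \<theta> \<in> \<Theta> \<Longrightarrow> strict_mono (G \<theta>)"
    and close: "\<And>\<theta> e. \<theta> \<in> \<Theta> \<Longrightarrow> 0 < e \<Longrightarrow> \<forall>\<^sub>F \<theta>' in at \<theta> within \<Theta>. \<forall>t. \<bar>G \<theta>' t - G \<theta> t\<bar> < e"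
    and \<alpha>: "0 < \<alpha>" "\<alpha> < 1"
  shows "continuous_on \<Theta> (\<lambda>\<theta>. gen_inv (G \<theta>) \<alpha>)"
  unfolding continuous_on_def
proof (intro ballI tendstoI)
  fix \<theta> and e :: real assume \<theta>: "\<theta> \<in> \<Theta>" and "0 < e"
  define y where "y = gen_inv (G \<theta>) \<alpha>"
  have "G \<theta> y = \<alpha>"
    using cdf_gen_inv_cdf[OF distr[OF \<theta>] \<alpha>] cont[OF \<theta>]
    by (simp add: y_def G[OF \<theta>] continuous_on_eq_continuous_at)
  moreover have "G \<theta> (y - e / 2) < G \<theta> y" "G \<theta> y < G \<theta> (y + e / 2)"
    using mono[OF \<theta>] \<open>0 < e\<close> by (simp_all add: strict_mono_less)
  ultimately have gaps: "G \<theta> (y - e / 2) < \<alpha>" "\<alpha> < G \<theta> (y + e / 2)"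
    by simp_all
  define \<kappa> where "\<kappa> = min (G \<theta> (y + e / 2) - \<alpha>) (\<alpha> - G \<theta> (y - e / 2))"
  have "0 < \<kappa>"
    using gaps by (simp add: \<kappa>_def)
  then have "\<forall>\<^sub>F \<theta>' in at \<theta> within \<Theta>. \<forall>t. \<bar>G \<theta>' t - G \<theta> t\<bar> < \<kappa>"
    by (rule close[OF \<theta>])
  moreover have "\<forall>\<^sub>F \<theta>' in at \<theta> within \<Theta>. \<theta>' \<in> \<Theta>"
    by (simp add: eventually_at_filter)
  ultimately show "\<forall>\<^sub>F \<theta>' in at \<theta> within \<Theta>. dist (gen_inv (G \<theta>') \<alpha>) (gen_inv (G \<theta>) \<alpha>) < e"
  proof eventually_elim
    case (elim \<theta>')
    have "\<kappa> \<le> G \<theta> (y + e / 2) - \<alpha>" "\<kappa> \<le> \<alpha> - G \<theta> (y - e / 2)"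
      by (simp_all add: \<kappa>_def)
    moreover have "\<bar>G \<theta>' (y + e / 2) - G \<theta> (y + e / 2)\<bar> < \<kappa>" "\<bar>G \<theta>' (y - e / 2) - G \<theta> (y - e / 2)\<bar> < \<kappa>"
      using elim(1) by blast+
    ultimately have "\<alpha> \<le> G \<theta>' (y + e / 2)" "\<not> \<alpha> \<le> G \<theta>' (y - e / 2)"
      by (simp_all add: abs_less_iff)
    then have "gen_inv (G \<theta>') \<alpha> \<le> y + e / 2" "\<not> gen_inv (G \<theta>') \<alpha> \<le> y - e / 2"
      using gen_inv_cdf_le_iff[OF distr[OF elim(2)] \<alpha>] by (simp_all add: G[OF elim(2)])
    then show ?case
      using \<open>0 < e\<close> by (simp add: y_def dist_real_def abs_less_iff)
  qed
qed

theorem proposition2: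
  fixes \<eta> :: "real^'d \<Rightarrow> real"
    and P :: "'d \<Rightarrow> real measure"
    and \<Theta> :: "(real^'p) set"
    and C :: "real^'p \<Rightarrow> real^'d \<Rightarrow> real"
    and c :: "real^'p \<Rightarrow> real^'d \<Rightarrow> real"
    and P\<theta> :: "real^'p \<Rightarrow> (real^'d) measure"
    and \<alpha> :: real
  assumes eta_meas: "\<eta> \<in> borel_measurable borel"
    and marg: "\<And>j. prob_space (P j) \<and> sets (P j) = sets borel"
    and Theta_compact: "compact \<Theta>"
    and copula: "\<And>\<theta>. \<theta> \<in> \<Theta> \<Longrightarrow> is_copula (C \<theta>)"
    and P_theta: "\<And>\<theta>. \<theta> \<in> \<Theta> \<Longrightarrow> prob_space (P\<theta> \<theta>) \<and> sets (P\<theta> \<theta>) = sets borel \<and>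
        (\<forall>x. cdf_vec (P\<theta> \<theta>) x = C \<theta> (\<chi> j. cdf (P j) (x $ j)))"
    and alpha: "0 < \<alpha>" "\<alpha> < 1"
    and A1_f: "\<And>\<theta>. \<theta> \<in> \<Theta> \<Longrightarrow> \<exists>f :: real^'d \<Rightarrow> ennreal.
        f \<in> borel_measurable borel \<and> P\<theta> \<theta> = density lborel f"
    and A1_c: "\<And>\<theta>. \<theta> \<in> \<Theta> \<Longrightarrow> (\<forall>u\<in>cbox 0 One. c \<theta> u \<ge> 0 \<and>
        (c \<theta> has_integral C \<theta> u) (cbox 0 u))"
    and A1_cont: "continuous_on (\<Theta> \<times> cbox 0 One) (\<lambda>(\<theta>, u). c \<theta> u)"
    and A2: "\<And>\<theta>. \<theta> \<in> \<Theta> \<Longrightarrow> continuous_on UNIV (push_cdf (P\<theta> \<theta>) \<eta>)"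
    and A3_mono: "\<And>\<theta>. \<theta> \<in> \<Theta> \<Longrightarrow> strict_mono (push_cdf (P\<theta> \<theta>) \<eta>)"
    and A3_unif: "\<exists>\<epsilon> :: real \<Rightarrow> real. (\<forall>\<delta>>0. \<epsilon> \<delta> > 0) \<and>
        (\<forall>\<theta>\<in>\<Theta>. \<forall>\<delta>>0.
          let G = push_cdf (P\<theta> \<theta>) \<eta>; y = gen_inv G \<alpha> in
          min (G (y + \<delta>) - G y) (G y - G (y - \<delta>)) \<ge> \<epsilon> \<delta>)"
  shows "continuous_on \<Theta> (\<lambda>\<theta>. gen_inv (push_cdf (P\<theta> \<theta>) \<eta>) \<alpha>)"
proof -
  have marginals: "\<And>j. real_distribution (P j)"
    using marg by (simp add: real_distribution_def real_distribution_axioms_def)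
  have model: "has_copula_density P (c \<theta>) (P\<theta> \<theta>)" if "\<theta> \<in> \<Theta>" for \<theta>
  proof (rule has_copula_densityI[OF marginals _ _ _ A1_c[OF that]])
    have "continuous_on (cbox 0 One) ((\<lambda>(\<theta>, u). c \<theta> u) \<circ> Pair \<theta>)"
      using that by (intro continuous_on_compose continuous_on_subset[OF A1_cont] continuous_intros) auto
    then show "continuous_on (cbox 0 One) (c \<theta>)"
      by (simp add: o_def)
  qed (use P_theta[OF that] in auto)
  have "real_distribution (distr (P\<theta> \<theta>) borel \<eta>)" "push_cdf (P\<theta> \<theta>) \<eta> = cdf (distr (P\<theta> \<theta>) borel \<eta>)"
    if "\<theta> \<in> \<Theta>" for \<theta>
    using push_cdf_eq_cdf_distr[of "P\<theta> \<theta>" \<eta>] P_theta[OF that] eta_meas by auto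
  then show ?thesis
    using eventually_push_cdf_copula_density_close[OF marginals model A1_cont eta_meas]
    by (intro continuous_on_gen_inv[OF _ _ A2 A3_mono _ alpha])
qed

end
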